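(* Let $\varepsilon\in\{1,-1\}$ and $n\ge2$. Then $$\sum_{\sigma\in\mathcal D^D_n}\varepsilon^{\ell_D(\sigma)}q^{\mathrm{Dmaj}(\sigma)}=\sum_{\sigma\in\mathcal D^\Delta_n}\varepsilon^{\ell_B(\sigma)}(\varepsilon q)^{\mathrm{fmaj}(\sigma)}+\frac{\varepsilon}{2}\left(\sum_{\sigma\in\mathcal D^B_{n-1}}\varepsilon^{\ell_B(\sigma)}q^{\mathrm{fmaj}(\sigma)}-\sum_{\sigma\in\mathcal D^B_{n-1}}\varepsilon^{\ell_B(\sigma)}(-q)^{\mathrm{fmaj}(\sigma)}\right).$$
   Context: $B_n$ is the set of words $\sigma=\sigma_1\cdots\sigma_n$ with $\sigma_i\in\{\pm1,\dots,\pm n\}$ and $|\sigma_1|\cdots|\sigma_n|$ a permutation of $[n]$; $\mathrm{neg}(\sigma)$ is the number of negative letters; $D_n=\{\sigma\in B_n:\mathrm{neg}(\sigma)\text{ even}\}$; $\Delta_n=\{\sigma\in B_n:\sigma_n>0\}$. A derangement is an element with $\sigma_i\ne i$ for all $i$; $\mathcal D^B_n,\mathcal D^D_n,\mathcal D^\Delta_n$ denote the derangements in $B_n,D_n,\Delta_n$. $\mathrm{inv}$ in usual order, $\ell_B(\sigma)=\mathrm{inv}(\sigma)-\sum_{i:\sigma_i<0}\sigma_i$, $\ell_D(\sigma)=\ell_B(\sigma)-\mathrm{neg}(\sigma)$. Order $\prec$: $-1\prec-2\prec\cdots\prec-N\prec1\prec\cdots\prec N$; $\mathrm{maj}_\prec(w)=\sum_{i:w_i\succ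 w_{i+1}}i$; $\mathrm{fmaj}(w)=2\mathrm{maj}_\prec(w)+\mathrm{neg}(w)$; $\mathrm{Dmaj}(\sigma)=\mathrm{fmaj}(\sigma_1\cdots\sigma_{n-1}|\sigma_n|)$. *)

theory Defs
  imports Main
begin

text \<open>Signed permutations are represented as lists of integers (one-line notation,
  0-indexed list positions, entry at position i is sigma_(i+1)).\<close>

definition signed_perms :: "nat \<Rightarrow> int list set" where
  "signed_perms n = {w. length w = n \<and> distinct (map abs w) \<and> set (map abs w) = {1..int n}}"

definition neg :: "int list \<Rightarrow> nat" where
  "neg w = length (filter (\<lambda>x. x < 0) w)"

definition typeD :: "nat \<Rightarrow> int list set" where
  "typeD n = {w \<in> signed_perms n. even (neg w)}"

definition typeDelta :: "nat \<Rightarrow> int list set" where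
  "typeDelta n = {w \<in> signed_perms n. last w > 0}"

definition is_derangement :: "int list \<Rightarrow> bool" where
  "is_derangement w \<longleftrightarrow> (\<forall>i<length w. w ! i \<noteq> int (i + 1))"

definition derangB :: "nat \<Rightarrow> int list set" where
  "derangB n = {w \<in> signed_perms n. is_derangement w}"

definition derangD :: "nat \<Rightarrow> int list set" where
  "derangD n = {w \<in> typeD n. is_derangement w}"

definition derangDelta :: "nat \<Rightarrow> int list set" where
  "derangDelta n = {w \<in> typeDelta n. is_derangement w}"

definition inv :: "int list \<Rightarrow> nat" where
  "inv w = card {(i, j). i < j \<and> j < length w \<and> w ! i > w ! j}"

definition lengthB :: "int list \<Rightarrow> nat" where
  "lengthB w = inv w + nat (\<Sum>i<length w. if w ! i < 0 then - (w ! i) else 0)"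

definition lengthD :: "int list \<Rightarrow> nat" where
  "lengthD w = lengthB w - neg w"

definition prec :: "int \<Rightarrow> int \<Rightarrow> bool" where
  "prec x y \<longleftrightarrow> (x < 0 \<and> y > 0) \<or> (x < 0 \<and> y < 0 \<and> y < x) \<or> (x > 0 \<and> y > 0 \<and> x < y)"

text \<open>maj w = sum of i (1-indexed) with w_i succ w_(i+1).\<close>
definition maj_prec :: "int list \<Rightarrow> nat" where
  "maj_prec w = (\<Sum>i\<in>{1..<length w}. if prec (w ! i) (w ! (i - 1)) then i else 0)"

definition fmaj :: "int list \<Rightarrow> nat" where
  "fmaj w = 2 * maj_prec w + neg w"

definition Dmaj :: "int list \<Rightarrow> nat" where
  "Dmaj w = fmaj (butlast w @ [abs (last w)])"

end

theory Submission
  imports Defs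
begin

text \<open>Forgetting the sign of the last letter is injective on type-D words, since the parity
  of neg fixes that sign. On the D-derangements of length n its image consists of the
  Delta-derangements and of the words t @ [n] with t a B-derangement of length n - 1 having odd
  neg; the latter are the images of the D-derangements ending in -n. Negating a last letter m
  changes lengthB by 2m - 1 and neg by 1, so \<epsilon>^lengthD of a D-word equals \<epsilon>^(lengthB + neg)
  of its image. On the Delta part fmaj \<equiv> neg (mod 2) turns this into the (\<epsilon> q)-weight; on the
  other part appending n changes none of lengthB, neg, fmaj, and (q^f - (-q)^f)/2 keeps exactly
  the terms with odd fmaj, that is, with odd neg.\<close>

subsection \<open>Statistics of a word extended by one letter\<close>

lemma inv_snoc: "inv (u @ [x]) = inv u + card {i. i < length u \<and> u ! i > x}"
proof -
  let ?L = "length u"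
  have "{(i, j). i < j \<and> j < length (u @ [x]) \<and> (u @ [x]) ! i > (u @ [x]) ! j}
      = {(i, j). i < j \<and> j < ?L \<and> u ! i > u ! j} \<union> (\<lambda>i. (i, ?L)) ` {i. i < ?L \<and> u ! i > x}"
    by (auto simp: nth_append less_Suc_eq split: if_splits)
  moreover have "finite {(i, j). i < j \<and> j < ?L \<and> u ! i > u ! j}"
    by (rule finite_subset[of _ "{..<?L} \<times> {..<?L}"]) auto
  moreover have "{(i, j). i < j \<and> j < ?L \<and> u ! i > u ! j} \<inter> (\<lambda>i. (i, ?L)) ` {i. i < ?L \<and> u ! i > x} = {}"
    by auto
  moreover have "card ((\<lambda>i. (i, ?L)) ` {i. i < ?L \<and> u ! i > x}) = card {i. i < ?L \<and> u ! i > x}"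
    by (rule card_image) (auto simp: inj_on_def)
  ultimately show ?thesis
    unfolding inv_def by (simp add: card_Un_disjoint)
qed

lemma lengthB_snoc:
  "lengthB (u @ [x]) = lengthB u + card {i. i < length u \<and> u ! i > x} + nat (- x)"
proof -
  let ?a = "\<lambda>y :: int. if y < 0 then - y else 0"
  have "(\<Sum>i<length (u @ [x]). ?a ((u @ [x]) ! i)) = (\<Sum>i<length u. ?a (u ! i)) + ?a x"
    by (auto simp: nth_append intro!: sum.cong)
  moreover have "(\<Sum>i<length u. ?a (u ! i)) \<ge> 0"
    by (rule sum_nonneg) simp
  ultimately show ?thesis
    unfolding lengthB_def inv_snoc by (simp add: nat_add_distrib)
qed

lemma neg_snoc: "neg (u @ [x]) = neg u + (if x < 0 then 1 else 0)"
  unfolding neg_def by simp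

lemma neg_le_lengthB: "neg w \<le> lengthB w"
proof (induction w rule: rev_induct)
  case Nil
  then show ?case by (simp add: neg_def)
next
  case (snoc x u)
  have "x < 0 \<Longrightarrow> 1 \<le> nat (- x)" by simp
  with snoc show ?case by (auto simp: lengthB_snoc neg_snoc)
qed

lemma maj_prec_snoc:
  "maj_prec (u @ [x]) = maj_prec u + (if u \<noteq> [] \<and> prec x (last u) then length u else 0)"
proof (cases "u = []")
  case True
  then show ?thesis by (simp add: maj_prec_def)
next
  case False
  let ?L = "length u" and ?d = "\<lambda>i. if prec ((u @ [x]) ! i) ((u @ [x]) ! (i - 1)) then i else 0"
  have "maj_prec (u @ [x]) = (\<Sum>i\<in>{1..<?L}. ?d i) + (if prec x (last u) then ?L else 0)"
    using False by (simp add: maj_prec_def nth_append last_conv_nth Suc_le_eq)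
  also have "(\<Sum>i\<in>{1..<?L}. ?d i) = maj_prec u"
    unfolding maj_prec_def by (rule sum.cong) (auto simp: nth_append)
  finally show ?thesis using False by simp
qed

lemma lengthB_snoc_greater:
  assumes "\<forall>y\<in>set u. y < x" "x > 0"
  shows "lengthB (u @ [x]) = lengthB u"
proof -
  have "{i. i < length u \<and> u ! i > x} = {}"
    using assms(1) nth_mem by fastforce
  then show ?thesis using assms(2) by (simp add: lengthB_snoc)
qed

lemma fmaj_snoc_greater:
  assumes "\<forall>y\<in>set u. y < x" "x > 0"
  shows "fmaj (u @ [x]) = fmaj u"
proof -
  have "\<not> prec x (last u)" if "u \<noteq> []"
    using assms last_in_set[OF that] by (auto simp: prec_def)
  then show ?thesis
    using assms(2) unfolding fmaj_def by (auto simp: maj_prec_snoc neg_snoc)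
qed

lemma even_fmaj_iff: "even (fmaj w) \<longleftrightarrow> even (neg w)"
  by (simp add: fmaj_def)

lemma is_derangement_snoc:
  "is_derangement (u @ [x]) \<longleftrightarrow> is_derangement u \<and> x \<noteq> int (length u + 1)"
  unfolding is_derangement_def by (auto simp: nth_append less_Suc_eq)

lemma length_signed_perms: "w \<in> signed_perms n \<Longrightarrow> length w = n"
  by (simp add: signed_perms_def)

lemma signed_perms_letter_bounds:
  assumes "w \<in> signed_perms n" "y \<in> set w"
  shows "1 \<le> \<bar>y\<bar> \<and> \<bar>y\<bar> \<le> int n"
proof -
  have "\<bar>y\<bar> \<in> set (map abs w)" using assms(2) by auto
  then show ?thesis using assms(1) by (auto simp: signed_perms_def)
qed

lemma finite_signed_perms: "finite (signed_perms n)"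
proof (rule finite_subset)
  show "signed_perms n \<subseteq> {w. set w \<subseteq> {- int n..int n} \<and> length w = n}"
    using signed_perms_letter_bounds length_signed_perms by fastforce
  show "finite {w. set w \<subseteq> {- int n..int n} \<and> length w = n}"
    by (rule finite_lists_length_eq) simp
qed

lemma signed_perms_SucE:
  assumes "w \<in> signed_perms (Suc k)"
  obtains u x where "w = u @ [x]" "length u = k"
proof -
  have "w \<noteq> []" using length_signed_perms[OF assms] by auto
  then obtain u x where "w = u @ [x]" by (metis rev_exhaust)
  then show ?thesis using that length_signed_perms[OF assms] by simp
qed

lemma signed_perms_snoc_abs:
  "\<bar>x\<bar> = \<bar>y\<bar> \<Longrightarrow> u @ [x] \<in> signed_perms n \<longleftrightarrow> u @ [y] \<in> signed_perms n"
  by (simp add: signed_perms_def)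

lemma signed_perms_snoc_max:
  assumes "\<bar>x\<bar> = int (Suc k)"
  shows "u @ [x] \<in> signed_perms (Suc k) \<longleftrightarrow> u \<in> signed_perms k"
proof
  assume "u @ [x] \<in> signed_perms (Suc k)"
  then have d: "distinct (map abs u)" "\<bar>x\<bar> \<notin> set (map abs u)" "length u = k"
    and s: "insert \<bar>x\<bar> (set (map abs u)) = {1..int (Suc k)}"
    by (auto simp: signed_perms_def)
  have "set (map abs u) = {1..int (Suc k)} - {\<bar>x\<bar>}"
    using d(2) s by blast
  also have "\<dots> = {1..int k}"
    using assms by auto
  finally show "u \<in> signed_perms k"
    using d by (simp add: signed_perms_def)
next
  assume "u \<in> signed_perms k"
  then show "u @ [x] \<in> signed_perms (Suc k)"
    using assms by (auto simp: signed_perms_def)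
qed

lemma signed_perms_less_Suc:
  assumes "t \<in> signed_perms k"
  shows "\<forall>y\<in>set t. y < int (Suc k)"
  using signed_perms_letter_bounds[OF assms] by fastforce

lemma card_smaller_abs_before_last:
  assumes "u @ [x] \<in> signed_perms n"
  shows "card {i. i < length u \<and> \<bar>u ! i\<bar> < \<bar>x\<bar>} = nat (\<bar>x\<bar> - 1)"
proof -
  have d: "distinct (map abs u)" "\<bar>x\<bar> \<notin> set (map abs u)"
    and s: "insert \<bar>x\<bar> (set (map abs u)) = {1..int n}"
    using assms by (auto simp: signed_perms_def)
  let ?I = "{i. i < length u \<and> \<bar>u ! i\<bar> < \<bar>x\<bar>}"
  have "inj_on (\<lambda>i. \<bar>u ! i\<bar>) ?I"
    using d(1) by (auto simp: inj_on_def distinct_conv_nth)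
  then have "card ?I = card ((\<lambda>i. \<bar>u ! i\<bar>) ` ?I)"
    by (simp add: card_image)
  also have "(\<lambda>i. \<bar>u ! i\<bar>) ` ?I = {v \<in> set (map abs u). v < \<bar>x\<bar>}"
    by (auto simp: in_set_conv_nth intro: image_eqI nth_mem)
  also have "\<dots> = {1..\<bar>x\<bar> - 1}"
  proof -
    have "set (map abs u) = {1..int n} - {\<bar>x\<bar>}"
      using d(2) s by blast
    moreover have "\<bar>x\<bar> \<le> int n"
      using s by auto
    ultimately show ?thesis by auto
  qed
  finally show ?thesis by simp
qed

lemma lengthB_negate_last:
  assumes "u @ [m] \<in> signed_perms n" "m > 0"
  shows "lengthB (u @ [- m]) = lengthB (u @ [m]) + 2 * nat m - 1"
proof -
  have "m \<notin> set (map abs u)"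
    using assms by (auto simp: signed_perms_def)
  then have "\<bar>u ! i\<bar> \<noteq> m" if "i < length u" for i
    using that by (metis image_eqI nth_mem set_map)
  then have "u ! i > - m \<longleftrightarrow> u ! i > m \<or> \<bar>u ! i\<bar> < \<bar>m\<bar>" if "i < length u" for i
    using that assms(2) by fastforce
  then have "{i. i < length u \<and> u ! i > - m}
      = {i. i < length u \<and> u ! i > m} \<union> {i. i < length u \<and> \<bar>u ! i\<bar> < \<bar>m\<bar>}"
    by auto
  moreover have "{i. i < length u \<and> u ! i > m} \<inter> {i. i < length u \<and> \<bar>u ! i\<bar> < \<bar>m\<bar>} = {}"
    using assms(2) by auto
  ultimately have "card {i. i < length u \<and> u ! i > - m}
      = card {i. i < length u \<and> u ! i > m} + card {i. i < length u \<and> \<bar>u ! i\<bar> < \<bar>m\<bar>}"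
    by (simp add: card_Un_disjoint)
  then show ?thesis
    using card_smaller_abs_before_last[OF assms(1)] assms(2) by (simp add: lengthB_snoc)
qed

subsection \<open>Unsigning the last letter\<close>

definition unsign_last :: "int list \<Rightarrow> int list" where
  "unsign_last w = butlast w @ [\<bar>last w\<bar>]"

lemma unsign_last_snoc [simp]: "unsign_last (u @ [x]) = u @ [\<bar>x\<bar>]"
  by (simp add: unsign_last_def)

lemma even_lengthD_unsign_last:
  assumes "w \<in> signed_perms (Suc k)"
  shows "even (lengthD w) \<longleftrightarrow> even (lengthB (unsign_last w) + neg (unsign_last w))"
proof -
  obtain u x where w: "w = u @ [x]" using signed_perms_SucE[OF assms] .
  have "even (lengthD w) \<longleftrightarrow> even (lengthB w + neg w)"
    using neg_le_lengthB[of w] unfolding lengthD_def by (simp add: even_diff_nat)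
  moreover have "x \<noteq> 0"
    using signed_perms_letter_bounds[OF assms, of x] w by auto
  moreover have "lengthB (u @ [x]) = lengthB (u @ [\<bar>x\<bar>]) + 2 * nat \<bar>x\<bar> - 1" if "x < 0"
    using lengthB_negate_last[of u "\<bar>x\<bar>"] assms w signed_perms_snoc_abs[of x "\<bar>x\<bar>"] that
    by simp
  ultimately show ?thesis
    using w by (cases "x < 0") (auto simp: neg_snoc)
qed

lemma inj_on_unsign_last_typeD: "inj_on unsign_last (typeD n)"
proof (rule inj_onI)
  fix s t assume s: "s \<in> typeD n" and t: "t \<in> typeD n" and eq: "unsign_last s = unsign_last t"
  show "s = t"
  proof (cases n)
    case 0
    then show ?thesis using s t by (simp add: typeD_def signed_perms_def)
  next
    case (Suc k)
    then obtain u x v y where s': "s = u @ [x]" and t': "t = v @ [y]"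
      using s t signed_perms_SucE by (metis (no_types, lifting) mem_Collect_eq typeD_def)
    have "x \<noteq> 0" "y \<noteq> 0"
      using s t signed_perms_letter_bounds s' t' by (fastforce simp: typeD_def)+
    moreover have "u = v" "\<bar>x\<bar> = \<bar>y\<bar>" using eq s' t' by auto
    moreover have "x < 0 \<longleftrightarrow> y < 0"
      using s t s' t' \<open>u = v\<close> by (auto simp: typeD_def neg_snoc split: if_splits)
    ultimately show ?thesis
      using s' t' by (auto simp: abs_if split: if_splits)
  qed
qed

lemma derangDelta_snoc_abs:
  assumes "u @ [x] \<in> derangD n" "x \<noteq> - int n"
  shows "u @ [\<bar>x\<bar>] \<in> derangDelta n"
proof -
  have sp: "u @ [x] \<in> signed_perms n" and "is_derangement (u @ [x])"
    using assms(1) by (auto simp: derangD_def typeD_def)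
  moreover have "x \<noteq> 0"
    using signed_perms_letter_bounds[OF sp, of x] by auto
  moreover have "n = length u + 1"
    using length_signed_perms[OF sp] by simp
  ultimately show ?thesis
    using assms(2) signed_perms_snoc_abs[of x "\<bar>x\<bar>"]
    by (auto simp: derangDelta_def typeDelta_def is_derangement_snoc abs_if)
qed

lemma derangD_snoc_neg_max:
  "u @ [- int (Suc k)] \<in> derangD (Suc k) \<longleftrightarrow> u \<in> derangB k \<and> odd (neg u)"
  using signed_perms_snoc_max[of "- int (Suc k)" k u] length_signed_perms[of u k]
  by (auto simp: derangD_def typeD_def derangB_def neg_snoc is_derangement_snoc)

lemma derangD_snoc_parity_sign:
  assumes "u @ [y] \<in> derangDelta n"
  shows "u @ [if even (neg u) then y else - y] \<in> derangD n"
proof -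
  let ?z = "if even (neg u) then y else - y"
  have y: "u @ [y] \<in> signed_perms n" "y > 0" "is_derangement (u @ [y])"
    using assms by (auto simp: derangDelta_def typeDelta_def)
  have "u @ [?z] \<in> signed_perms n"
    using y(1) signed_perms_snoc_abs[of ?z y] by simp
  moreover have "even (neg (u @ [?z]))"
    using y(2) by (simp add: neg_snoc)
  moreover have "is_derangement (u @ [?z])"
    using y(2,3) by (simp add: is_derangement_snoc)
  ultimately show ?thesis by (simp add: derangD_def typeD_def)
qed

lemma unsign_last_image_derangD:
  "unsign_last ` derangD (Suc k)
    = derangDelta (Suc k) \<union> (\<lambda>t. t @ [int (Suc k)]) ` {t \<in> derangB k. odd (neg t)}"
  (is "_ = ?Delta \<union> ?E")
proof (intro equalityI subsetI)
  fix y assume "y \<in> unsign_last ` derangD (Suc k)"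
  then obtain s where s: "s \<in> derangD (Suc k)" and y: "y = unsign_last s" by auto
  then have "s \<in> signed_perms (Suc k)" by (simp add: derangD_def typeD_def)
  then obtain u x where s': "s = u @ [x]" and "length u = k" by (rule signed_perms_SucE)
  show "y \<in> ?Delta \<union> ?E"
  proof (cases "x = - int (Suc k)")
    case True
    then have "u \<in> derangB k \<and> odd (neg u)" using s s' derangD_snoc_neg_max by simp
    then show ?thesis using y s' True by simp
  next
    case False
    then show ?thesis using derangDelta_snoc_abs s s' y by simp
  qed
next
  fix y assume "y \<in> ?Delta \<union> ?E"
  then show "y \<in> unsign_last ` derangD (Suc k)"
  proof
    assume y: "y \<in> ?Delta"
    then have "y \<in> signed_perms (Suc k)" by (simp add: derangDelta_def typeDelta_def)
    then obtain u z where y': "y = u @ [z]" and "length u = k" by (rule signed_perms_SucE)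
    have "z > 0" using y y' by (simp add: derangDelta_def typeDelta_def)
    then have "y = unsign_last (u @ [if even (neg u) then z else - z])" using y' by simp
    moreover have "u @ [if even (neg u) then z else - z] \<in> derangD (Suc k)"
      using derangD_snoc_parity_sign y y' by simp
    ultimately show ?thesis by blast
  next
    assume "y \<in> ?E"
    then obtain t where "t \<in> derangB k" "odd (neg t)" "y = unsign_last (t @ [- int (Suc k)])"
      by auto
    moreover have "t @ [- int (Suc k)] \<in> derangD (Suc k)"
      using calculation derangD_snoc_neg_max by simp
    ultimately show ?thesis by blast
  qed
qed

lemma finite_derangB: "finite (derangB n)"
  unfolding derangB_def by (rule finite_subset[OF _ finite_signed_perms]) auto

lemma finite_derangDelta: "finite (derangDelta n)"
  unfolding derangDelta_def typeDelta_def by (rule finite_subset[OF _ finite_signed_perms]) auto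

lemma sum_derangD_unsign_last:
  "(\<Sum>\<sigma>\<in>derangD (Suc k). g (unsign_last \<sigma>))
    = (\<Sum>\<sigma>\<in>derangDelta (Suc k). g \<sigma>) + (\<Sum>t\<in>{t \<in> derangB k. odd (neg t)}. g (t @ [int (Suc k)]))"
proof -
  let ?E = "(\<lambda>t. t @ [int (Suc k)]) ` {t \<in> derangB k. odd (neg t)}"
  have "inj_on unsign_last (derangD (Suc k))"
    by (rule inj_on_subset[OF inj_on_unsign_last_typeD]) (auto simp: derangD_def)
  then have "(\<Sum>\<sigma>\<in>derangD (Suc k). g (unsign_last \<sigma>)) = (\<Sum>\<sigma>\<in>derangDelta (Suc k) \<union> ?E. g \<sigma>)"
    using sum.reindex[of unsign_last "derangD (Suc k)" g]
    by (simp add: unsign_last_image_derangD o_def)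
  also have "\<dots> = (\<Sum>\<sigma>\<in>derangDelta (Suc k). g \<sigma>) + (\<Sum>\<sigma>\<in>?E. g \<sigma>)"
  proof (rule sum.union_disjoint[OF finite_derangDelta])
    show "finite ?E" using finite_derangB by simp
    show "derangDelta (Suc k) \<inter> ?E = {}"
      by (auto simp: derangDelta_def derangB_def is_derangement_snoc length_signed_perms)
  qed
  also have "(\<Sum>\<sigma>\<in>?E. g \<sigma>) = (\<Sum>t\<in>{t \<in> derangB k. odd (neg t)}. g (t @ [int (Suc k)]))"
    by (simp add: sum.reindex inj_on_def)
  finally show ?thesis .
qed

lemma power_eq_if_parity_eq:
  fixes e :: "'a :: comm_ring_1"
  assumes "e * e = 1" "even a \<longleftrightarrow> even b"
  shows "e ^ a = e ^ b"
proof -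
  have "e ^ m = e ^ (m mod 2)" for m
  proof -
    have "e ^ m = (e * e) ^ (m div 2) * e ^ (m mod 2)"
      by (metis div_mult_mod_eq mult.commute power2_eq_square power_add power_mult)
    then show ?thesis using assms(1) by simp
  qed
  moreover have "a mod 2 = b mod 2"
    using assms(2) by (metis even_iff_mod_2_eq_zero odd_iff_mod_2_eq_one)
  ultimately show ?thesis by metis
qed

lemma sum_odd_neg_snoc_max:
  fixes e q :: "'a :: field_char_0"
  assumes e: "e * e = 1"
  shows "(\<Sum>t\<in>{t \<in> derangB k. odd (neg t)}.
      e ^ (lengthB (t @ [int (Suc k)]) + neg (t @ [int (Suc k)])) * q ^ fmaj (t @ [int (Suc k)]))
    = e / 2 * ((\<Sum>t\<in>derangB k. e ^ lengthB t * q ^ fmaj t)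
               - (\<Sum>t\<in>derangB k. e ^ lengthB t * (- q) ^ fmaj t))"
proof -
  have odd_term: "e ^ (lengthB (t @ [int (Suc k)]) + neg (t @ [int (Suc k)])) * q ^ fmaj (t @ [int (Suc k)])
      = e / 2 * (e ^ lengthB t * q ^ fmaj t - e ^ lengthB t * (- q) ^ fmaj t)"
    if "t \<in> derangB k" "odd (neg t)" for t
  proof -
    have "e ^ neg t = e ^ 1"
      by (rule power_eq_if_parity_eq[OF e]) (use that(2) in simp)
    moreover have "odd (fmaj t)"
      using that(2) by (simp add: even_fmaj_iff)
    moreover have "\<forall>y\<in>set t. y < int (Suc k)"
      using that(1) signed_perms_less_Suc[of t k] by (simp add: derangB_def)
    ultimately show ?thesis
      by (simp add: lengthB_snoc_greater fmaj_snoc_greater neg_snoc power_add power_minus_odd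
          field_simps)
  qed
  have even_term: "e ^ lengthB t * q ^ fmaj t - e ^ lengthB t * (- q) ^ fmaj t = 0"
    if "even (neg t)" for t
    using that by (simp add: even_fmaj_iff power_minus_even)
  have "(\<Sum>t\<in>{t \<in> derangB k. odd (neg t)}.
      e ^ (lengthB (t @ [int (Suc k)]) + neg (t @ [int (Suc k)])) * q ^ fmaj (t @ [int (Suc k)]))
    = (\<Sum>t\<in>derangB k. e / 2 * (e ^ lengthB t * q ^ fmaj t - e ^ lengthB t * (- q) ^ fmaj t))"
    unfolding sum.inter_filter[OF finite_derangB]
    by (rule sum.cong) (auto simp del: of_nat_Suc simp: odd_term even_term)
  then show ?thesis
    by (simp only: sum_subtractf[symmetric] sum_distrib_left)
qed

theorem lemma4p8:
  fixes q \<epsilon> :: "'a :: field_char_0" and n :: nat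
  assumes "\<epsilon> = 1 \<or> \<epsilon> = -1" and "n \<ge> 2"
  shows "(\<Sum>\<sigma>\<in>derangD n. \<epsilon> ^ lengthD \<sigma> * q ^ Dmaj \<sigma>)
    = (\<Sum>\<sigma>\<in>derangDelta n. \<epsilon> ^ lengthB \<sigma> * (\<epsilon> * q) ^ fmaj \<sigma>)
      + \<epsilon> / 2 * ((\<Sum>\<sigma>\<in>derangB (n - 1). \<epsilon> ^ lengthB \<sigma> * q ^ fmaj \<sigma>)
                 - (\<Sum>\<sigma>\<in>derangB (n - 1). \<epsilon> ^ lengthB \<sigma> * (- q) ^ fmaj \<sigma>))"
proof -
  have e: "\<epsilon> * \<epsilon> = 1" using assms(1) by auto
  obtain k where n: "n = Suc k" using assms(2) by (cases n) auto
  define F where "F y = \<epsilon> ^ (lengthB y + neg y) * q ^ fmaj y" for y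
  have "(\<Sum>\<sigma>\<in>derangD n. \<epsilon> ^ lengthD \<sigma> * q ^ Dmaj \<sigma>) = (\<Sum>\<sigma>\<in>derangD n. F (unsign_last \<sigma>))"
    unfolding n F_def Dmaj_def unsign_last_def[symmetric]
    by (intro sum.cong refl arg_cong2[where f = "(*)"] power_eq_if_parity_eq[OF e]
        even_lengthD_unsign_last) (auto simp: derangD_def typeD_def)
  also have "\<dots> = (\<Sum>\<sigma>\<in>derangDelta n. F \<sigma>) + (\<Sum>t\<in>{t \<in> derangB k. odd (neg t)}. F (t @ [int n]))"
    unfolding n by (rule sum_derangD_unsign_last)
  also have "(\<Sum>\<sigma>\<in>derangDelta n. F \<sigma>) = (\<Sum>\<sigma>\<in>derangDelta n. \<epsilon> ^ lengthB \<sigma> * (\<epsilon> * q) ^ fmaj \<sigma>)"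
    using power_eq_if_parity_eq[OF e even_fmaj_iff]
    by (simp add: F_def power_add power_mult_distrib mult.assoc)
  also have "(\<Sum>t\<in>{t \<in> derangB k. odd (neg t)}. F (t @ [int n]))
      = \<epsilon> / 2 * ((\<Sum>\<sigma>\<in>derangB (n - 1). \<epsilon> ^ lengthB \<sigma> * q ^ fmaj \<sigma>)
                 - (\<Sum>\<sigma>\<in>derangB (n - 1). \<epsilon> ^ lengthB \<sigma> * (- q) ^ fmaj \<sigma>))"
    unfolding F_def n diff_Suc_1 by (rule sum_odd_neg_snoc_max[OF e])
  finally show ?thesis .
qed

end
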